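(* Let $\phi:[0,\infty)\to[0,\infty)$ be a smooth, non-negative, non-increasing kernel, $\sigma>0$, $p>0$, $\kappa>0$, and $\Omega=\mathbb{R}^n\times\mathbb{R}^n\times(0,\infty)$. Let $f$ be a solution of \[ \partial_t f + v\cdot \nabla_x f + \nabla_v \cdot (f F(f)) + \nabla_v\cdot(f R) + \partial_\theta(f\Theta(f)) = 0,\qquad f(0)=f_0, \] with \[ F(f)(x,v)=\int_\Omega\phi(x-y)(w-v)f(y,w,\eta,t)\,\mathrm{d}y\,\mathrm{d}w\,\mathrm{d}\eta,\quad R(v,\theta)=\sigma v(\theta-|v|^p),\quad \Theta(f)(x,\theta)=\kappa\int_\Omega\phi(x-y)(\eta-\theta)f(y,w,\eta,t)\,\mathrm{d}y\,\mathrm{d}w\,\mathrm{d}\eta, \] where $f_0\ge0$ is compactly supported in $\Omega$. Let $\ell$ be a linear functional on $\mathbb{R}^n$ such that $\ell(v_0)\ge0$ for every $(x_0,v_0,\theta_0)\in\operatorname{supp} f_0$. Then $\ell(v)\ge 0$ for every $t>0$ and every $(x,v,\theta)\in\operatorname{supp} f_t$. *)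

theory Defs
  imports "HOL-Analysis.Analysis"
begin

definition Omega :: "((real^'n) \<times> (real^'n) \<times> real) set" where
  "Omega = UNIV \<times> UNIV \<times> {0<..}"

definition supp_Omega :: "((real^'n) \<times> (real^'n) \<times> real \<Rightarrow> real) \<Rightarrow> ((real^'n) \<times> (real^'n) \<times> real) set" where
  "supp_Omega g = Omega \<inter> closure {z \<in> Omega. g z \<noteq> 0}"

definition smooth_on_nonneg :: "(real \<Rightarrow> real) \<Rightarrow> bool" where
  "smooth_on_nonneg \<phi> \<longleftrightarrow> (\<exists>d :: nat \<Rightarrow> real \<Rightarrow> real. d 0 = \<phi> \<and>
      (\<forall>k. \<forall>r\<ge>0. (d k has_real_derivative d (Suc k) r) (at r within {0..})))"

definition alignF :: "(real \<Rightarrow> real) \<Rightarrow> (real \<Rightarrow> real^'n \<Rightarrow> real^'n \<Rightarrow> real \<Rightarrow> real)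
    \<Rightarrow> real \<Rightarrow> real^'n \<Rightarrow> real^'n \<Rightarrow> real^'n" where
  "alignF \<phi> f t x v = integral Omega (\<lambda>(y, w, \<eta>). (\<phi> (norm (x - y)) * f t y w \<eta>) *\<^sub>R (w - v))"

definition relaxR :: "real \<Rightarrow> real \<Rightarrow> real^'n \<Rightarrow> real \<Rightarrow> real^'n" where
  "relaxR \<sigma> p v \<theta> = (\<sigma> * (\<theta> - norm v powr p)) *\<^sub>R v"

definition alignTheta :: "real \<Rightarrow> (real \<Rightarrow> real) \<Rightarrow> (real \<Rightarrow> real^'n \<Rightarrow> real^'n \<Rightarrow> real \<Rightarrow> real)
    \<Rightarrow> real \<Rightarrow> real^'n \<Rightarrow> real \<Rightarrow> real" where
  "alignTheta \<kappa> \<phi> f t x \<theta> = \<kappa> * integral Omega (\<lambda>(y, w, \<eta>). \<phi> (norm (x - y)) * (\<eta> - \<theta>) * f t y w \<eta>)"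

definition C1_on :: "'a::real_normed_vector set \<Rightarrow> ('a \<Rightarrow> real) \<Rightarrow> bool" where
  "C1_on S g \<longleftrightarrow> (\<exists>g'. (\<forall>z\<in>S. (g has_derivative blinfun_apply (g' z)) (at z)) \<and> continuous_on S g')"

definition kinetic_solution ::
  "(real \<Rightarrow> real) \<Rightarrow> real \<Rightarrow> real \<Rightarrow> real \<Rightarrow> (real^'n \<Rightarrow> real^'n \<Rightarrow> real \<Rightarrow> real)
    \<Rightarrow> (real \<Rightarrow> real^'n \<Rightarrow> real^'n \<Rightarrow> real \<Rightarrow> real) \<Rightarrow> bool" where
  "kinetic_solution \<phi> \<sigma> p \<kappa> f0 f \<longleftrightarrow>
     continuous_on ({0..} \<times> Omega) (\<lambda>(t, x, v, \<theta>). f t x v \<theta>) \<and>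
     C1_on ({0<..} \<times> Omega) (\<lambda>(t, x, v, \<theta>). f t x v \<theta>) \<and>
     (\<forall>T\<ge>0. \<exists>K. compact K \<and> K \<subseteq> Omega \<and>
        (\<forall>t\<in>{0..T}. supp_Omega (\<lambda>(x, v, \<theta>). f t x v \<theta>) \<subseteq> K)) \<and>
     (\<forall>x v \<theta>. (x, v, \<theta>) \<in> Omega \<longrightarrow> f 0 x v \<theta> = f0 x v \<theta>) \<and>
     (\<forall>t>0. \<forall>x v \<theta>. (x, v, \<theta>) \<in> Omega \<longrightarrow>
        deriv (\<lambda>s. f s x v \<theta>) t
        + (\<Sum>i\<in>UNIV. v $ i * deriv (\<lambda>h. f t (x + h *\<^sub>R axis i 1) v \<theta>) 0)
        + (\<Sum>i\<in>UNIV. deriv (\<lambda>h. (f t x (v + h *\<^sub>R axis i 1) \<theta>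
              *\<^sub>R alignF \<phi> f t x (v + h *\<^sub>R axis i 1)) $ i) 0)
        + (\<Sum>i\<in>UNIV. deriv (\<lambda>h. (f t x (v + h *\<^sub>R axis i 1) \<theta>
              *\<^sub>R relaxR \<sigma> p (v + h *\<^sub>R axis i 1) \<theta>) $ i) 0)
        + deriv (\<lambda>\<eta>. f t x v \<eta> * alignTheta \<kappa> \<phi> f t x \<eta>) \<theta>
        = 0)"

end

theory Submission
  imports Defs
begin

(* Two maximum principles on a cylinder [0,T] x K, K a compact set containing the
   supports up to time T, for f damped by exp (- lambda t) with lambda large.

   At a negative minimum of exp (- lambda t) f all phase-space derivatives of f vanish and
   f_t <= lambda f.  In non-divergence form the equation then reads f_t = - c f, where c
   collects div_v F = - n m, div_v R and d_theta Theta = - kappa m (m the local mass) and is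
   bounded below by - C on [0,T] x K; lambda > C forces f_t >= C f > lambda f.  Hence f >= 0.

   Let psi v = (min (l v) 0)^2.  At a positive maximum of exp (- lambda t) f psi the velocity
   gradient is forced to be d_v f = - 2 f grad l / l(v), so velocity transport contributes
   (2 f / l(v)) l(F + R).  Maximality also gives f(w) l(w)^2 <= f l(v)^2 for every competitor
   velocity w with l(w) < l(v), which bounds l(F) from below by phi(0) f l(v) |K| / 4, and
   again a large lambda gives a contradiction.  So f vanishes where l(v) < 0, and as
   {l >= 0} is closed it contains the support of f. *)

lemma integrable_on_compact_support:
  fixes h :: "'a::euclidean_space \<Rightarrow> 'b::euclidean_space"
  assumes "continuous_on S h" "compact K" "K \<subseteq> S" "\<And>z. z \<in> S \<Longrightarrow> z \<notin> K \<Longrightarrow> h z = 0"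
  shows "h integrable_on S"
proof -
  have "h integrable_on K"
    using borel_integrable_compact[OF assms(2) continuous_on_subset[OF assms(1,3)]]
    by (simp add: set_integrable_def set_borel_integral_eq_integral(1))
  then have "(\<lambda>z. if z \<in> K then h z else 0) integrable_on K"
    by (rule integrable_eq) auto
  then have "(\<lambda>z. if z \<in> K then h z else 0) integrable_on S"
    by (rule integrable_on_superset) (use assms in auto)
  then show ?thesis by (rule integrable_eq) (use assms in auto)
qed

lemma differentiable_along_line:
  assumes "G differentiable (at z)"
  shows "(\<lambda>s. G (z + (s - s0) *\<^sub>R d)) differentiable (at s0)"
proof -
  have "(\<lambda>s. z + (s - s0) *\<^sub>R d) differentiable (at s0)"
    by simp
  with assms show ?thesis
    using differentiable_chain_at[of "\<lambda>s. z + (s - s0) *\<^sub>R d" s0 G] by (simp add: o_def)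
qed

lemma deriv_nonneg_at_left_max:
  fixes g :: "real \<Rightarrow> real"
  assumes "(g has_real_derivative D) (at t)" "e > 0" "\<And>h. 0 < h \<Longrightarrow> h < e \<Longrightarrow> g (t - h) \<le> g t"
  shows "D \<ge> 0"
proof (rule ccontr)
  assume "\<not> D \<ge> 0"
  then obtain d where d: "d > 0" "\<And>h. 0 < h \<Longrightarrow> h < d \<Longrightarrow> g t < g (t - h)"
    using DERIV_neg_dec_left[OF assms(1)] by force
  have "g t < g (t - min d e / 2)" "g (t - min d e / 2) \<le> g t"
    using d assms(2,3) by auto
  then show False by simp
qed

lemma exp_damped_deriv_ge_at_left_max:
  fixes g :: "real \<Rightarrow> real"
  assumes "(g has_real_derivative D) (at t)" "e > 0"
    and "\<And>h. 0 < h \<Longrightarrow> h < e \<Longrightarrow> exp (- \<gamma> * (t - h)) * g (t - h) \<le> exp (- \<gamma> * t) * g t"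
  shows "\<gamma> * g t \<le> D"
proof -
  have "((\<lambda>s. exp (- \<gamma> * s) * g s) has_real_derivative exp (- \<gamma> * t) * (D - \<gamma> * g t)) (at t)"
    using assms(1) by (auto intro!: derivative_eq_intros simp: algebra_simps)
  then have "0 \<le> exp (- \<gamma> * t) * (D - \<gamma> * g t)"
    using deriv_nonneg_at_left_max assms(2,3) by blast
  then show ?thesis by (simp add: zero_le_mult_iff)
qed

lemma exp_damped_deriv_le_at_left_min:
  fixes g :: "real \<Rightarrow> real"
  assumes "(g has_real_derivative D) (at t)" "e > 0"
    and "\<And>h. 0 < h \<Longrightarrow> h < e \<Longrightarrow> exp (- \<gamma> * t) * g t \<le> exp (- \<gamma> * (t - h)) * g (t - h)"
  shows "D \<le> \<gamma> * g t"
  using exp_damped_deriv_ge_at_left_max[of "\<lambda>s. - g s" "- D" t e \<gamma>] assms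
  by (auto intro!: derivative_eq_intros)

lemma abs_powr_mult_has_derivative_0:
  assumes "p > 0"
  shows "((\<lambda>h. \<bar>h\<bar> powr p * h) has_real_derivative 0) (at 0)"
proof -
  have "((\<lambda>h. \<bar>h\<bar> powr p) \<longlongrightarrow> 0) (at (0::real))"
    by (rule tendsto_zero_powrI) (auto intro!: tendsto_eq_intros simp: assms)
  moreover have "\<forall>\<^sub>F h in at 0. \<bar>h\<bar> powr p = (\<bar>h\<bar> powr p * h - \<bar>0\<bar> powr p * 0) / (h - 0)"
    by (auto simp: eventually_at_filter)
  ultimately have "((\<lambda>h. (\<bar>h\<bar> powr p * h - \<bar>0\<bar> powr p * 0) / (h - 0)) \<longlongrightarrow> 0) (at 0)"
    by (rule Lim_transform_eventually)
  then show ?thesis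
    by (simp add: has_field_derivative_iff)
qed

lemma relaxR_component_has_derivative:
  fixes v :: "real^'n"
  assumes p: "p > 0" and \<sigma>: "\<sigma> \<ge> 0" and \<theta>: "\<theta> \<ge> 0"
  shows "\<exists>D. ((\<lambda>h. relaxR \<sigma> p (v + h *\<^sub>R axis i 1) \<theta> $ i) has_real_derivative D) (at 0)
           \<and> - \<sigma> * (1 + p) * norm v powr p \<le> D"
proof (cases "v = 0")
  case True
  (* the norm is not differentiable at 0, but h * |h| powr p is, because p > 0 *)
  have "(\<lambda>h. relaxR \<sigma> p (v + h *\<^sub>R axis i 1) \<theta> $ i) = (\<lambda>h. \<sigma> * \<theta> * h - \<sigma> * (\<bar>h\<bar> powr p * h))"
    using True by (auto simp: fun_eq_iff relaxR_def algebra_simps)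
  moreover have "((\<lambda>h. \<sigma> * \<theta> * h - \<sigma> * (\<bar>h\<bar> powr p * h)) has_real_derivative \<sigma> * \<theta>) (at 0)"
    using DERIV_diff[OF DERIV_cmult[OF DERIV_ident] DERIV_cmult[OF abs_powr_mult_has_derivative_0[OF p]]]
    by simp
  ultimately show ?thesis
    using True \<sigma> \<theta> by auto
next
  case False
  have v: "norm v > 0" using False by simp
  have "((\<lambda>h. v + h *\<^sub>R axis i 1) has_derivative (\<lambda>h. h *\<^sub>R axis i 1)) (at 0)"
    by (auto intro!: derivative_eq_intros)
  from has_derivative_compose[OF this has_derivative_norm[of "v + 0 *\<^sub>R axis i 1"]]
  have "((\<lambda>h. norm (v + h *\<^sub>R axis i 1)) has_derivative (\<lambda>h. (h *\<^sub>R axis i 1) \<bullet> sgn v)) (at 0)"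
    using False by (simp add: o_def)
  moreover have "(\<lambda>h. (h *\<^sub>R axis i 1) \<bullet> sgn v) = (*) (v $ i / norm v)"
    by (auto simp: fun_eq_iff inner_axis' sgn_div_norm field_simps)
  ultimately have norm_deriv:
    "((\<lambda>h. norm (v + h *\<^sub>R axis i 1)) has_real_derivative v $ i / norm v) (at 0)"
    by (simp only: has_field_derivative_def)
  have "((\<lambda>h. \<sigma> * (\<theta> - norm (v + h *\<^sub>R axis i 1) powr p) * (v $ i + h)) has_real_derivative
      \<sigma> * (\<theta> - norm v powr p) - \<sigma> * p * norm v powr p * (v $ i / norm v)\<^sup>2) (at 0)"
    using v by (auto intro!: derivative_eq_intros norm_deriv simp: powr_diff power2_eq_square field_simps)
  then have "((\<lambda>h. relaxR \<sigma> p (v + h *\<^sub>R axis i 1) \<theta> $ i) has_real_derivative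
      \<sigma> * (\<theta> - norm v powr p) - \<sigma> * p * norm v powr p * (v $ i / norm v)\<^sup>2) (at 0)"
    by (simp add: relaxR_def)
  moreover have "- \<sigma> * (1 + p) * norm v powr p \<le> \<sigma> * (\<theta> - norm v powr p) - \<sigma> * p * norm v powr p * (v $ i / norm v)\<^sup>2"
  proof -
    have "(v $ i / norm v)\<^sup>2 \<le> 1"
      using component_le_norm_cart[of v i] v by (simp add: power_divide abs_le_square_iff[symmetric])
    then have "\<sigma> * p * norm v powr p * (v $ i / norm v)\<^sup>2 \<le> \<sigma> * p * norm v powr p"
      using p \<sigma> by (simp add: mult_left_le)
    moreover have "0 \<le> \<sigma> * \<theta>" using \<sigma> \<theta> by simp
    ultimately show ?thesis by (simp add: algebra_simps)
  qed
  ultimately show ?thesis by (intro exI conjI)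
qed

lemma gap_lower_bound_of_square_bound:
  fixes a b L W :: real
  assumes "0 \<le> b" "0 < a" "L < 0" "W < L" "b * W\<^sup>2 \<le> a * L\<^sup>2"
  shows "a * L / 4 \<le> b * (W - L)"
proof -
  have W2: "W\<^sup>2 > 0" using assms(3,4) by simp
  have "b \<le> a * L\<^sup>2 / W\<^sup>2"
    using assms(5) W2 by (simp add: pos_le_divide_eq)
  then have "b * (L - W) \<le> a * L\<^sup>2 / W\<^sup>2 * (L - W)"
    using assms(4) by (intro mult_right_mono) auto
  also have "\<dots> = a * (- L) / W\<^sup>2 * ((- L) * (L - W))"
    by (simp add: power2_eq_square)
  also have "\<dots> \<le> a * (- L) / W\<^sup>2 * (W\<^sup>2 / 4)"
  proof (rule mult_left_mono)
    have "0 \<le> (W - 2 * L)\<^sup>2" by simp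
    then show "(- L) * (L - W) \<le> W\<^sup>2 / 4" by (simp add: power2_eq_square algebra_simps)
  next
    show "0 \<le> a * (- L) / W\<^sup>2"
      using assms W2 by (intro divide_nonneg_pos mult_nonneg_nonneg) auto
  qed
  also have "\<dots> = - (a * L / 4)" using W2 by simp
  finally show ?thesis by (simp add: algebra_simps)
qed

lemma linear_cart_basis_expansion:
  fixes l :: "real^'n \<Rightarrow> real"
  assumes "linear l"
  shows "l y = (\<Sum>i\<in>UNIV. y $ i * l (axis i 1))"
proof -
  have "l y = l (\<Sum>i\<in>UNIV. y $ i *\<^sub>R axis i 1)"
    using basis_expansion[of y] by (simp add: scalar_mult_eq_scaleR)
  then show ?thesis by (simp add: linear_sum[OF assms] linear_scale[OF assms])
qed

lemma mem_Omega_iff: "(x, v, \<theta>) \<in> Omega \<longleftrightarrow> \<theta> > 0"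
  by (auto simp: Omega_def)

lemma mem_supp_Omega:
  assumes "z \<in> Omega" "g z \<noteq> 0"
  shows "z \<in> supp_Omega g"
proof -
  have "z \<in> closure {z \<in> Omega. g z \<noteq> 0}"
    using assms by (intro closure_subset[THEN subsetD]) simp
  with assms(1) show ?thesis unfolding supp_Omega_def by (rule IntI)
qed

lemma supp_Omega_subset_closed:
  assumes "closed C" "\<And>z. z \<in> Omega \<Longrightarrow> z \<notin> C \<Longrightarrow> g z = 0"
  shows "supp_Omega g \<subseteq> C"
proof -
  have "{z \<in> Omega. g z \<noteq> 0} \<subseteq> C" using assms(2) by auto
  then have "closure {z \<in> Omega. g z \<noteq> 0} \<subseteq> C" by (rule closure_minimal[OF _ assms(1)])
  then show ?thesis unfolding supp_Omega_def by (rule subset_trans[OF Int_lower2])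
qed

lemma smooth_on_nonneg_imp_continuous_on:
  assumes "smooth_on_nonneg \<phi>"
  shows "continuous_on {0..} \<phi>"
proof -
  obtain d :: "nat \<Rightarrow> real \<Rightarrow> real" where d: "d 0 = \<phi>"
    "\<And>r. r \<ge> 0 \<Longrightarrow> (d 0 has_real_derivative d 1 r) (at r within {0..})"
    using assms unfolding smooth_on_nonneg_def by force
  then have "continuous (at r within {0..}) \<phi>" if "r \<ge> 0" for r
    using DERIV_continuous[OF d(2)[OF that]] by simp
  then show ?thesis
    unfolding continuous_on_eq_continuous_within by simp
qed

lemma compact_support_attains_positive_max:
  fixes H :: "'a::topological_space \<Rightarrow> real"
  assumes "compact C" "C \<subseteq> S" "continuous_on C H" "\<And>q. q \<in> S \<Longrightarrow> q \<notin> C \<Longrightarrow> H q = 0"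
    and "q0 \<in> S" "0 < H q0"
  obtains q1 where "q1 \<in> C" "0 < H q1" "\<And>q. q \<in> S \<Longrightarrow> H q \<le> H q1"
proof -
  have "q0 \<in> C" using assms(4-6) by force
  then obtain q1 where q1: "q1 \<in> C" "\<And>q. q \<in> C \<Longrightarrow> H q \<le> H q1"
    using continuous_attains_sup[OF assms(1) _ assms(3)] by blast
  have "0 < H q1" using q1(2)[OF \<open>q0 \<in> C\<close>] assms(6) by simp
  moreover have "H q \<le> H q1" if "q \<in> S" for q
    using q1(2) assms(4)[OF that] \<open>0 < H q1\<close> by (cases "q \<in> C") auto
  ultimately show ?thesis using that q1(1) by blast
qed

locale kinetic_setting =
  fixes \<phi> :: "real \<Rightarrow> real" and \<sigma> p \<kappa> :: real
    and f0 :: "real^'n \<Rightarrow> real^'n \<Rightarrow> real \<Rightarrow> real"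
    and f :: "real \<Rightarrow> real^'n \<Rightarrow> real^'n \<Rightarrow> real \<Rightarrow> real"
    and \<l> :: "real^'n \<Rightarrow> real"
  assumes phi_smooth: "smooth_on_nonneg \<phi>"
    and phi_nonneg: "\<And>r. 0 \<le> r \<Longrightarrow> 0 \<le> \<phi> r"
    and phi_le_phi_0: "\<And>r. 0 \<le> r \<Longrightarrow> \<phi> r \<le> \<phi> 0"
    and sigma_pos: "\<sigma> > 0" and p_pos: "p > 0" and kappa_pos: "\<kappa> > 0"
    and f0_nonneg: "\<And>x v \<theta>. (x, v, \<theta>) \<in> Omega \<Longrightarrow> 0 \<le> f0 x v \<theta>"
    and solution: "kinetic_solution \<phi> \<sigma> p \<kappa> f0 f"
    and linear_l: "linear \<l>"
    and l_nonneg_on_supp_f0: "\<And>x v \<theta>. (x, v, \<theta>) \<in> supp_Omega (\<lambda>(x, v, \<theta>). f0 x v \<theta>) \<Longrightarrow> 0 \<le> \<l> v"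
begin

definition weight :: "real \<Rightarrow> real^'n \<Rightarrow> (real^'n) \<times> (real^'n) \<times> real \<Rightarrow> real" where
  "weight t x = (\<lambda>(y, w, \<eta>). \<phi> (norm (x - y)) * f t y w \<eta>)"

definition local_mass :: "real \<Rightarrow> real^'n \<Rightarrow> real" where
  "local_mass t x = integral Omega (weight t x)"

abbreviation f_t :: "real \<Rightarrow> real^'n \<Rightarrow> real^'n \<Rightarrow> real \<Rightarrow> real" where
  "f_t t x v \<theta> \<equiv> deriv (\<lambda>s. f s x v \<theta>) t"

abbreviation f_x :: "'n \<Rightarrow> real \<Rightarrow> real^'n \<Rightarrow> real^'n \<Rightarrow> real \<Rightarrow> real" where
  "f_x i t x v \<theta> \<equiv> deriv (\<lambda>h. f t (x + h *\<^sub>R axis i 1) v \<theta>) 0"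

abbreviation f_v :: "'n \<Rightarrow> real \<Rightarrow> real^'n \<Rightarrow> real^'n \<Rightarrow> real \<Rightarrow> real" where
  "f_v i t x v \<theta> \<equiv> deriv (\<lambda>h. f t x (v + h *\<^sub>R axis i 1) \<theta>) 0"

abbreviation f_\<theta> :: "real \<Rightarrow> real^'n \<Rightarrow> real^'n \<Rightarrow> real \<Rightarrow> real" where
  "f_\<theta> t x v \<theta> \<equiv> deriv (\<lambda>\<eta>. f t x v \<eta>) \<theta>"

lemma f_continuous: "continuous_on ({0..} \<times> Omega) (\<lambda>(t, x, v, \<theta>). f t x v \<theta>)"
  using solution unfolding kinetic_solution_def by (elim conjE)

lemma f_differentiable:
  assumes "t > 0" "(x, v, \<theta>) \<in> Omega"
  shows "(\<lambda>(t, x, v, \<theta>). f t x v \<theta>) differentiable (at (t, x, v, \<theta>))"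
proof -
  have "C1_on ({0<..} \<times> Omega) (\<lambda>(t, x, v, \<theta>). f t x v \<theta>)"
    using solution unfolding kinetic_solution_def by (elim conjE)
  then obtain D where D: "\<forall>q\<in>{0<..} \<times> Omega. ((\<lambda>(t, x, v, \<theta>). f t x v \<theta>) has_derivative blinfun_apply (D q)) (at q)"
    unfolding C1_on_def by blast
  have "(t, x, v, \<theta>) \<in> {0<..} \<times> Omega" using assms by simp
  with D show ?thesis unfolding differentiable_def by blast
qed

lemma has_f_t:
  assumes "t > 0" "(x, v, \<theta>) \<in> Omega"
  shows "((\<lambda>s. f s x v \<theta>) has_real_derivative f_t t x v \<theta>) (at t)"
  using differentiable_along_line[OF f_differentiable[OF assms], of t "(1, 0, 0, 0)"]
  by (simp add: DERIV_deriv_iff_real_differentiable)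

lemma has_f_x:
  assumes "t > 0" "(x, v, \<theta>) \<in> Omega"
  shows "((\<lambda>h. f t (x + h *\<^sub>R axis i 1) v \<theta>) has_real_derivative f_x i t x v \<theta>) (at 0)"
  using differentiable_along_line[OF f_differentiable[OF assms], of 0 "(0, axis i 1, 0, 0)"]
  by (simp add: DERIV_deriv_iff_real_differentiable)

lemma has_f_v:
  assumes "t > 0" "(x, v, \<theta>) \<in> Omega"
  shows "((\<lambda>h. f t x (v + h *\<^sub>R axis i 1) \<theta>) has_real_derivative f_v i t x v \<theta>) (at 0)"
  using differentiable_along_line[OF f_differentiable[OF assms], of 0 "(0, 0, axis i 1, 0)"]
  by (simp add: DERIV_deriv_iff_real_differentiable)

lemma has_f_\<theta>:
  assumes "t > 0" "(x, v, \<theta>) \<in> Omega"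
  shows "((\<lambda>\<eta>. f t x v \<eta>) has_real_derivative f_\<theta> t x v \<theta>) (at \<theta>)"
  using differentiable_along_line[OF f_differentiable[OF assms], of \<theta> "(0, 0, 0, 1)"]
  by (simp add: DERIV_deriv_iff_real_differentiable)

lemma compact_support:
  assumes "T \<ge> 0"
  obtains K where "compact K" "K \<subseteq> Omega"
    "\<And>t x v \<theta>. t \<in> {0..T} \<Longrightarrow> (x, v, \<theta>) \<in> Omega \<Longrightarrow> (x, v, \<theta>) \<notin> K \<Longrightarrow> f t x v \<theta> = 0"
proof -
  have "\<forall>T\<ge>0. \<exists>K. compact K \<and> K \<subseteq> Omega \<and>
      (\<forall>t\<in>{0..T}. supp_Omega (\<lambda>(x, v, \<theta>). f t x v \<theta>) \<subseteq> K)"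
    using solution unfolding kinetic_solution_def by (elim conjE)
  then obtain K where K: "compact K" "K \<subseteq> Omega"
      "\<forall>t\<in>{0..T}. supp_Omega (\<lambda>(x, v, \<theta>). f t x v \<theta>) \<subseteq> K"
    using assms by blast
  show ?thesis
  proof (rule that[OF K(1,2)])
    fix t x v \<theta> assume "t \<in> {0..T}" "(x, v, \<theta>) \<in> Omega" "(x, v, \<theta>) \<notin> K"
    moreover from this(1) K(3) have "supp_Omega (\<lambda>(x, v, \<theta>). f t x v \<theta>) \<subseteq> K" by blast
    ultimately show "f t x v \<theta> = 0"
      using mem_supp_Omega[of "(x, v, \<theta>)" "\<lambda>(x, v, \<theta>). f t x v \<theta>"] by auto
  qed
qed

lemma f_initial: "(x, v, \<theta>) \<in> Omega \<Longrightarrow> f 0 x v \<theta> = f0 x v \<theta>"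
  using solution unfolding kinetic_solution_def by (elim conjE) simp

lemma kinetic_equation:
  assumes "t > 0" "(x, v, \<theta>) \<in> Omega"
  shows "f_t t x v \<theta>
        + (\<Sum>i\<in>UNIV. v $ i * f_x i t x v \<theta>)
        + (\<Sum>i\<in>UNIV. deriv (\<lambda>h. (f t x (v + h *\<^sub>R axis i 1) \<theta>
              *\<^sub>R alignF \<phi> f t x (v + h *\<^sub>R axis i 1)) $ i) 0)
        + (\<Sum>i\<in>UNIV. deriv (\<lambda>h. (f t x (v + h *\<^sub>R axis i 1) \<theta>
              *\<^sub>R relaxR \<sigma> p (v + h *\<^sub>R axis i 1) \<theta>) $ i) 0)
        + deriv (\<lambda>\<eta>. f t x v \<eta> * alignTheta \<kappa> \<phi> f t x \<eta>) \<theta>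
        = 0"
  using solution unfolding kinetic_solution_def by (elim conjE) (simp only: assms)

lemma phi_0_nonneg: "\<phi> 0 \<ge> 0"
  using phi_nonneg by simp

lemma l_continuous: "continuous_on S \<l>"
  using linear_continuous_on linear_conv_bounded_linear linear_l by blast

lemma weight_continuous:
  assumes "t \<ge> 0"
  shows "continuous_on Omega (weight t x)"
proof -
  have "continuous_on Omega (\<lambda>z. \<phi> (norm (x - fst z)))"
    by (rule continuous_on_compose2[OF smooth_on_nonneg_imp_continuous_on[OF phi_smooth]])
       (auto intro!: continuous_intros)
  moreover have "continuous_on Omega (\<lambda>z. (\<lambda>(t, x, v, \<theta>). f t x v \<theta>) (t, z))"
    by (rule continuous_on_compose2[OF f_continuous]) (auto intro!: continuous_intros simp: assms)
  ultimately show ?thesis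
    unfolding weight_def split_def by (intro continuous_intros) (simp_all add: split_def)
qed

lemma weight_scaleR_integrable:
  fixes c :: "(real^'n) \<times> (real^'n) \<times> real \<Rightarrow> 'b::euclidean_space"
  assumes "t \<ge> 0" "continuous_on Omega c"
  shows "(\<lambda>z. weight t x z *\<^sub>R c z) integrable_on Omega"
proof -
  obtain K where K: "compact K" "K \<subseteq> Omega"
    "\<And>x v \<theta>. (x, v, \<theta>) \<in> Omega \<Longrightarrow> (x, v, \<theta>) \<notin> K \<Longrightarrow> f t x v \<theta> = 0"
    using compact_support[OF assms(1)] assms(1) by (metis atLeastAtMost_iff order_refl)
  show ?thesis
  proof (rule integrable_on_compact_support[OF _ K(1,2)])
    show "continuous_on Omega (\<lambda>z. weight t x z *\<^sub>R c z)"
      using weight_continuous[OF assms(1)] assms(2) by (intro continuous_intros)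
    show "weight t x z *\<^sub>R c z = 0" if "z \<in> Omega" "z \<notin> K" for z
      using K(3) that by (cases z) (simp add: weight_def)
  qed
qed

lemma weight_integrable: "t \<ge> 0 \<Longrightarrow> weight t x integrable_on Omega"
  using weight_scaleR_integrable[of t "\<lambda>z. 1::real" x] by simp

lemma alignF_eq:
  assumes "t \<ge> 0"
  shows "alignF \<phi> f t x v
    = integral Omega (\<lambda>z. weight t x z *\<^sub>R fst (snd z)) - local_mass t x *\<^sub>R v"
proof -
  have "alignF \<phi> f t x v = integral Omega (\<lambda>z. weight t x z *\<^sub>R fst (snd z) - weight t x z *\<^sub>R v)"
    unfolding alignF_def by (rule arg_cong[where f = "integral Omega"]) (auto simp: weight_def scaleR_diff_right)
  also have "\<dots> = integral Omega (\<lambda>z. weight t x z *\<^sub>R fst (snd z)) - integral Omega (weight t x) *\<^sub>R v"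
  proof (rule integral_diff[THEN trans])
    show "(\<lambda>z. weight t x z *\<^sub>R fst (snd z)) integrable_on Omega"
      by (rule weight_scaleR_integrable[OF assms]) (intro continuous_intros)
    show "(\<lambda>z. weight t x z *\<^sub>R v) integrable_on Omega"
      by (rule integrable_on_scaleR_left[OF weight_integrable[OF assms]])
    show "integral Omega (\<lambda>z. weight t x z *\<^sub>R fst (snd z)) - integral Omega (\<lambda>z. weight t x z *\<^sub>R v)
      = integral Omega (\<lambda>z. weight t x z *\<^sub>R fst (snd z)) - integral Omega (weight t x) *\<^sub>R v"
      using has_integral_scaleR_left[OF integrable_integral[OF weight_integrable[OF assms, of x]], of v]
      by (simp add: integral_unique)
  qed
  finally show ?thesis by (simp add: local_mass_def)
qed

lemma alignTheta_eq:
  assumes "t \<ge> 0"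
  shows "alignTheta \<kappa> \<phi> f t x \<theta>
    = \<kappa> * (integral Omega (\<lambda>z. weight t x z * snd (snd z)) - \<theta> * local_mass t x)"
proof -
  have "alignTheta \<kappa> \<phi> f t x \<theta> = \<kappa> * integral Omega (\<lambda>z. weight t x z * snd (snd z) - \<theta> * weight t x z)"
    unfolding alignTheta_def by (rule arg_cong[where f = "\<lambda>I. \<kappa> * integral Omega I"]) (auto simp: weight_def algebra_simps)
  also have "\<dots> = \<kappa> * (integral Omega (\<lambda>z. weight t x z * snd (snd z)) - \<theta> * integral Omega (weight t x))"
  proof -
    have "(\<lambda>z. weight t x z * snd (snd z)) integrable_on Omega"
      using weight_scaleR_integrable[OF assms, of "\<lambda>z. snd (snd z)"] by (simp add: continuous_intros)
    then show ?thesis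
      using integral_diff[OF _ integrable_on_mult_right[OF weight_integrable[OF assms]], of _ \<theta>]
      by simp
  qed
  finally show ?thesis by (simp add: local_mass_def)
qed

lemma linear_alignF:
  assumes "t \<ge> 0"
  shows "\<l> (alignF \<phi> f t x v) = integral Omega (\<lambda>z. weight t x z * (\<l> (fst (snd z)) - \<l> v))"
proof -
  have int_l: "(\<lambda>z. weight t x z * \<l> (fst (snd z))) integrable_on Omega"
  proof -
    have "continuous_on Omega (\<lambda>z. \<l> (fst (snd z)))"
      by (rule continuous_on_compose2[OF l_continuous]) (auto intro!: continuous_intros)
    from weight_scaleR_integrable[OF assms this] show ?thesis by simp
  qed
  have "\<l> (integral Omega (\<lambda>z. weight t x z *\<^sub>R fst (snd z)))
      = integral Omega (\<lambda>z. weight t x z * \<l> (fst (snd z)))"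
    using integral_linear[OF weight_scaleR_integrable[OF assms, of "\<lambda>z. fst (snd z)"]
        linear_conv_bounded_linear[THEN iffD1, OF linear_l]]
    by (simp add: o_def linear_scale[OF linear_l] continuous_intros)
  moreover have "integral Omega (\<lambda>z. weight t x z * (\<l> (fst (snd z)) - \<l> v))
      = integral Omega (\<lambda>z. weight t x z * \<l> (fst (snd z))) - local_mass t x * \<l> v"
    using integral_diff[OF int_l integrable_on_mult_left[OF weight_integrable[OF assms]]]
    by (simp add: algebra_simps local_mass_def)
  ultimately show ?thesis
    by (simp add: alignF_eq[OF assms] linear_diff[OF linear_l] linear_scale[OF linear_l])
qed

lemma deriv_alignF_flux:
  assumes "t > 0" "(x, v, \<theta>) \<in> Omega"
  shows "deriv (\<lambda>h. (f t x (v + h *\<^sub>R axis i 1) \<theta> *\<^sub>R alignF \<phi> f t x (v + h *\<^sub>R axis i 1)) $ i) 0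
    = f_v i t x v \<theta> * alignF \<phi> f t x v $ i - local_mass t x * f t x v \<theta>"
proof -
  define A where "A = integral Omega (\<lambda>z. weight t x z *\<^sub>R fst (snd z))"
  have "(\<lambda>h. (f t x (v + h *\<^sub>R axis i 1) \<theta> *\<^sub>R alignF \<phi> f t x (v + h *\<^sub>R axis i 1)) $ i)
      = (\<lambda>h. f t x (v + h *\<^sub>R axis i 1) \<theta> * (A $ i - local_mass t x * (v $ i + h)))"
    using assms(1) by (simp add: fun_eq_iff alignF_eq A_def)
  moreover have "((\<lambda>h. f t x (v + h *\<^sub>R axis i 1) \<theta> * (A $ i - local_mass t x * (v $ i + h)))
      has_real_derivative f_v i t x v \<theta> * alignF \<phi> f t x v $ i - local_mass t x * f t x v \<theta>) (at 0)"
    using assms(1) by (auto intro!: derivative_eq_intros has_f_v[OF assms] simp: alignF_eq A_def algebra_simps)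
  ultimately show ?thesis by (simp add: DERIV_imp_deriv)
qed

lemma deriv_relaxR_flux:
  assumes "t > 0" "(x, v, \<theta>) \<in> Omega"
  obtains D where "- \<sigma> * (1 + p) * norm v powr p \<le> D"
    and "deriv (\<lambda>h. (f t x (v + h *\<^sub>R axis i 1) \<theta> *\<^sub>R relaxR \<sigma> p (v + h *\<^sub>R axis i 1) \<theta>) $ i) 0
      = f_v i t x v \<theta> * relaxR \<sigma> p v \<theta> $ i + D * f t x v \<theta>"
proof -
  obtain D where D: "((\<lambda>h. relaxR \<sigma> p (v + h *\<^sub>R axis i 1) \<theta> $ i) has_real_derivative D) (at 0)"
    "- \<sigma> * (1 + p) * norm v powr p \<le> D"
    using relaxR_component_has_derivative[OF p_pos] sigma_pos assms(2)
    by (metis less_imp_le mem_Omega_iff)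
  have "((\<lambda>h. f t x (v + h *\<^sub>R axis i 1) \<theta> * relaxR \<sigma> p (v + h *\<^sub>R axis i 1) \<theta> $ i)
      has_real_derivative f_v i t x v \<theta> * relaxR \<sigma> p v \<theta> $ i + D * f t x v \<theta>) (at 0)"
    using DERIV_mult[OF has_f_v[OF assms] D(1)] by simp
  then show ?thesis using that[OF D(2)] by (simp add: DERIV_imp_deriv)
qed

lemma deriv_alignTheta_flux:
  assumes "t > 0" "(x, v, \<theta>) \<in> Omega"
  shows "deriv (\<lambda>\<eta>. f t x v \<eta> * alignTheta \<kappa> \<phi> f t x \<eta>) \<theta>
    = f_\<theta> t x v \<theta> * alignTheta \<kappa> \<phi> f t x \<theta> - \<kappa> * local_mass t x * f t x v \<theta>"
proof -
  define B where "B = integral Omega (\<lambda>z. weight t x z * snd (snd z))"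
  have "(\<lambda>\<eta>. f t x v \<eta> * alignTheta \<kappa> \<phi> f t x \<eta>) = (\<lambda>\<eta>. f t x v \<eta> * (\<kappa> * (B - \<eta> * local_mass t x)))"
    using assms(1) by (simp add: fun_eq_iff alignTheta_eq B_def)
  moreover have "((\<lambda>\<eta>. f t x v \<eta> * (\<kappa> * (B - \<eta> * local_mass t x))) has_real_derivative
      f_\<theta> t x v \<theta> * alignTheta \<kappa> \<phi> f t x \<theta> - \<kappa> * local_mass t x * f t x v \<theta>) (at \<theta>)"
    using assms(1) by (auto intro!: derivative_eq_intros has_f_\<theta>[OF assms] simp: alignTheta_eq B_def algebra_simps)
  ultimately show ?thesis by (simp add: DERIV_imp_deriv)
qed

lemma kinetic_equation_nondivergence:
  assumes "t > 0" "(x, v, \<theta>) \<in> Omega"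
  obtains c where
    "- (CARD('n) * \<sigma> * (1 + p) * norm v powr p + (CARD('n) + \<kappa>) * local_mass t x) \<le> c"
    "f_t t x v \<theta> + (\<Sum>i\<in>UNIV. v $ i * f_x i t x v \<theta>)
      + (\<Sum>i\<in>UNIV. f_v i t x v \<theta> * (alignF \<phi> f t x v + relaxR \<sigma> p v \<theta>) $ i)
      + f_\<theta> t x v \<theta> * alignTheta \<kappa> \<phi> f t x \<theta> + c * f t x v \<theta> = 0"
proof -
  have "\<forall>i. \<exists>D. - \<sigma> * (1 + p) * norm v powr p \<le> D \<and>
    deriv (\<lambda>h. (f t x (v + h *\<^sub>R axis i 1) \<theta> *\<^sub>R relaxR \<sigma> p (v + h *\<^sub>R axis i 1) \<theta>) $ i) 0
      = f_v i t x v \<theta> * relaxR \<sigma> p v \<theta> $ i + D * f t x v \<theta>"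
    by (metis deriv_relaxR_flux[OF assms])
  then obtain D where D: "\<And>i. - \<sigma> * (1 + p) * norm v powr p \<le> D i"
    "\<And>i. deriv (\<lambda>h. (f t x (v + h *\<^sub>R axis i 1) \<theta> *\<^sub>R relaxR \<sigma> p (v + h *\<^sub>R axis i 1) \<theta>) $ i) 0
      = f_v i t x v \<theta> * relaxR \<sigma> p v \<theta> $ i + D i * f t x v \<theta>"
    by metis
  define c where "c = (\<Sum>i\<in>UNIV. D i) - (CARD('n) + \<kappa>) * local_mass t x"
  show ?thesis
  proof (rule that[of c])
    have "(\<Sum>i\<in>(UNIV::'n set). - \<sigma> * (1 + p) * norm v powr p) \<le> (\<Sum>i\<in>UNIV. D i)"
      by (intro sum_mono D(1))
    then show "- (CARD('n) * \<sigma> * (1 + p) * norm v powr p + (CARD('n) + \<kappa>) * local_mass t x) \<le> c"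
      by (simp add: c_def)
    show "f_t t x v \<theta> + (\<Sum>i\<in>UNIV. v $ i * f_x i t x v \<theta>)
      + (\<Sum>i\<in>UNIV. f_v i t x v \<theta> * (alignF \<phi> f t x v + relaxR \<sigma> p v \<theta>) $ i)
      + f_\<theta> t x v \<theta> * alignTheta \<kappa> \<phi> f t x \<theta> + c * f t x v \<theta> = 0"
      using kinetic_equation[OF assms]
      unfolding deriv_alignF_flux[OF assms] D(2) deriv_alignTheta_flux[OF assms]
      by (simp add: c_def sum.distrib sum_subtractf sum_distrib_left sum_distrib_right
          distrib_left algebra_simps)
  qed
qed

lemma f_x_eq_0_at_extremum:
  assumes "t > 0" "(x, v, \<theta>) \<in> Omega"
    and "(\<forall>y. f t y v \<theta> \<le> f t x v \<theta>) \<or> (\<forall>y. f t x v \<theta> \<le> f t y v \<theta>)"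
  shows "f_x i t x v \<theta> = 0"
  using assms(3)
proof
  assume "\<forall>y. f t y v \<theta> \<le> f t x v \<theta>"
  then show ?thesis by (intro DERIV_local_max[OF has_f_x[OF assms(1,2)] zero_less_one]) simp
next
  assume "\<forall>y. f t x v \<theta> \<le> f t y v \<theta>"
  then show ?thesis by (intro DERIV_local_min[OF has_f_x[OF assms(1,2)] zero_less_one]) simp
qed

lemma f_\<theta>_eq_0_at_extremum:
  assumes "t > 0" "(x, v, \<theta>) \<in> Omega"
    and "(\<forall>\<eta>>0. f t x v \<eta> \<le> f t x v \<theta>) \<or> (\<forall>\<eta>>0. f t x v \<theta> \<le> f t x v \<eta>)"
  shows "f_\<theta> t x v \<theta> = 0"
proof -
  have \<theta>: "\<theta> > 0" using assms(2) by (simp add: mem_Omega_iff)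
  from assms(3) show ?thesis
  proof
    assume "\<forall>\<eta>>0. f t x v \<eta> \<le> f t x v \<theta>"
    then show ?thesis by (intro DERIV_local_max[OF has_f_\<theta>[OF assms(1,2)] \<theta>]) auto
  next
    assume "\<forall>\<eta>>0. f t x v \<theta> \<le> f t x v \<eta>"
    then show ?thesis by (intro DERIV_local_min[OF has_f_\<theta>[OF assms(1,2)] \<theta>]) auto
  qed
qed

lemma f_v_eq_0_at_min:
  assumes "t > 0" "(x, v, \<theta>) \<in> Omega" "\<forall>w. f t x v \<theta> \<le> f t x w \<theta>"
  shows "f_v i t x v \<theta> = 0"
  using assms(3) by (intro DERIV_local_min[OF has_f_v[OF assms(1,2)] zero_less_one]) simp

definition l_neg_sq :: "real^'n \<Rightarrow> real" where
  "l_neg_sq w = (min (\<l> w) 0)\<^sup>2"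

lemma l_neg_sq_continuous: "continuous_on S l_neg_sq"
  unfolding l_neg_sq_def by (intro continuous_intros l_continuous)

lemma l_neg_sq_has_derivative:
  assumes "\<l> v < 0"
  shows "((\<lambda>h. l_neg_sq (v + h *\<^sub>R e)) has_real_derivative 2 * \<l> v * \<l> e) (at 0)"
proof (rule has_field_derivative_transform_within_open)
  show "((\<lambda>h. (\<l> v + h * \<l> e)\<^sup>2) has_real_derivative 2 * \<l> v * \<l> e) (at 0)"
    by (auto intro!: derivative_eq_intros)
  show "open {h. \<l> v + h * \<l> e < 0}" by (auto intro!: open_Collect_less continuous_intros)
  show "0 \<in> {h. \<l> v + h * \<l> e < 0}" using assms by simp
  show "(\<l> v + h * \<l> e)\<^sup>2 = l_neg_sq (v + h *\<^sub>R e)" if "h \<in> {h. \<l> v + h * \<l> e < 0}" for h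
    using that by (simp add: l_neg_sq_def linear_add[OF linear_l] linear_scale[OF linear_l])
qed

lemma f_v_at_weighted_max:
  assumes "t > 0" "(x, v, \<theta>) \<in> Omega" "\<l> v < 0"
    and "\<And>w. f t x w \<theta> * l_neg_sq w \<le> f t x v \<theta> * l_neg_sq v"
  shows "f_v i t x v \<theta> = - 2 * f t x v \<theta> * \<l> (axis i 1) / \<l> v"
proof -
  have "((\<lambda>h. f t x (v + h *\<^sub>R axis i 1) \<theta> * l_neg_sq (v + h *\<^sub>R axis i 1)) has_real_derivative
      f_v i t x v \<theta> * (\<l> v)\<^sup>2 + 2 * \<l> v * \<l> (axis i 1) * f t x v \<theta>) (at 0)"
    using DERIV_mult[OF has_f_v[OF assms(1,2)] l_neg_sq_has_derivative[OF assms(3)]] assms(3)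
    by (simp add: l_neg_sq_def)
  then have "f_v i t x v \<theta> * (\<l> v)\<^sup>2 + 2 * \<l> v * \<l> (axis i 1) * f t x v \<theta> = 0"
    by (rule DERIV_local_max[OF _ zero_less_one]) (use assms(4) in simp)
  then have "\<l> v * (f_v i t x v \<theta> * \<l> v + 2 * \<l> (axis i 1) * f t x v \<theta>) = 0"
    by (simp add: power2_eq_square algebra_simps)
  then have "f_v i t x v \<theta> * \<l> v = - 2 * \<l> (axis i 1) * f t x v \<theta>"
    using assms(3) by simp
  with assms(3) show ?thesis by (simp add: field_simps)
qed

end

locale kinetic_horizon = kinetic_setting \<phi> \<sigma> p \<kappa> f0 f \<l>
  for \<phi> :: "real \<Rightarrow> real" and \<sigma> p \<kappa> :: real
    and f0 :: "real^'n \<Rightarrow> real^'n \<Rightarrow> real \<Rightarrow> real"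
    and f :: "real \<Rightarrow> real^'n \<Rightarrow> real^'n \<Rightarrow> real \<Rightarrow> real"
    and \<l> :: "real^'n \<Rightarrow> real" +
  fixes T :: real and K :: "((real^'n) \<times> (real^'n) \<times> real) set" and M B :: real
  assumes compact_K: "compact K" and K_subset_Omega: "K \<subseteq> Omega"
    and f_vanishes_off_K:
      "\<And>t x v \<theta>. t \<in> {0..T} \<Longrightarrow> (x, v, \<theta>) \<in> Omega \<Longrightarrow> (x, v, \<theta>) \<notin> K \<Longrightarrow> f t x v \<theta> = 0"
    and f_bounded: "\<And>t x v \<theta>. t \<in> {0..T} \<Longrightarrow> (x, v, \<theta>) \<in> K \<Longrightarrow> \<bar>f t x v \<theta>\<bar> \<le> M"
    and K_bounded: "\<And>x v \<theta>. (x, v, \<theta>) \<in> K \<Longrightarrow> norm v \<le> B \<and> \<theta> \<le> B"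
    and M_nonneg: "M \<ge> 0" and B_nonneg: "B \<ge> 0"
begin

definition coeff_bound :: real where
  "coeff_bound = CARD('n) * \<sigma> * (1 + p) * B powr p + (CARD('n) + \<kappa>) * (\<phi> 0 * M * measure lebesgue K)"

(* coeff_bound bounds - c in the non-divergence form on K; the two further terms bound the
   velocity transport (2 f / l v) l (F + R) at a maximum of exp (- rate t) * l_neg_sq v * f *)
definition rate :: real where
  "rate = coeff_bound + \<phi> 0 * M * measure lebesgue K / 2 + 2 * \<sigma> * B + 1"

lemma coeff_bound_lt_rate: "coeff_bound < rate"
proof -
  have "0 \<le> \<phi> 0 * M * measure lebesgue K" "0 \<le> \<sigma> * B"
    using phi_0_nonneg M_nonneg B_nonneg sigma_pos by simp_all
  then show ?thesis unfolding rate_def by linarith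
qed

lemma const_indicator_integrable: "(\<lambda>z. (c::real) * indicator K z) integrable_on Omega"
proof -
  have "indicat_real K integrable_on Omega"
    using integrable_on_indicator[of K Omega] compact_K K_subset_Omega
    by (simp add: Int_absorb2 lmeasurable_compact)
  then show ?thesis by (rule integrable_on_mult_right)
qed

lemma integral_const_indicator: "integral Omega (\<lambda>z. (c::real) * indicator K z) = c * measure lebesgue K"
  using integral_indicator[of K Omega] compact_K K_subset_Omega
  by (simp add: Int_absorb2 lmeasurable_compact)

lemma local_mass_bound:
  assumes "t \<in> {0..T}"
  shows "\<bar>local_mass t x\<bar> \<le> \<phi> 0 * M * measure lebesgue K"
proof -
  have "norm (weight t x z) \<le> \<phi> 0 * M * indicator K z" if "z \<in> Omega" for z
  proof (cases z)
    case (fields y w \<eta>)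
    show ?thesis
    proof (cases "z \<in> K")
      case True
      have "\<phi> (norm (x - y)) * \<bar>f t y w \<eta>\<bar> \<le> \<phi> 0 * M"
        using phi_nonneg phi_le_phi_0 f_bounded[OF assms] True fields M_nonneg
        by (intro mult_mono) auto
      then show ?thesis using True phi_nonneg by (simp add: fields weight_def abs_mult)
    next
      case False
      then show ?thesis using f_vanishes_off_K[OF assms] that by (simp add: fields weight_def)
    qed
  qed
  then have "norm (local_mass t x) \<le> integral Omega (\<lambda>z. \<phi> 0 * M * indicator K z)"
    unfolding local_mass_def using assms
    by (intro integral_norm_bound_integral weight_integrable const_indicator_integrable) auto
  then show ?thesis unfolding integral_const_indicator by simp
qed

lemma kinetic_equation_in_K:
  assumes t: "0 < t" "t \<le> T" and z: "(x, v, \<theta>) \<in> K"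
  obtains c where "- coeff_bound \<le> c"
    "f_t t x v \<theta> + (\<Sum>i\<in>UNIV. v $ i * f_x i t x v \<theta>)
      + (\<Sum>i\<in>UNIV. f_v i t x v \<theta> * (alignF \<phi> f t x v + relaxR \<sigma> p v \<theta>) $ i)
      + f_\<theta> t x v \<theta> * alignTheta \<kappa> \<phi> f t x \<theta> + c * f t x v \<theta> = 0"
proof -
  obtain c where c:
    "- (CARD('n) * \<sigma> * (1 + p) * norm v powr p + (CARD('n) + \<kappa>) * local_mass t x) \<le> c"
    and pde: "f_t t x v \<theta> + (\<Sum>i\<in>UNIV. v $ i * f_x i t x v \<theta>)
      + (\<Sum>i\<in>UNIV. f_v i t x v \<theta> * (alignF \<phi> f t x v + relaxR \<sigma> p v \<theta>) $ i)
      + f_\<theta> t x v \<theta> * alignTheta \<kappa> \<phi> f t x \<theta> + c * f t x v \<theta> = 0"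
    using kinetic_equation_nondivergence[OF t(1)] z K_subset_Omega by blast
  have "norm v powr p \<le> B powr p"
    using K_bounded[OF z] p_pos by (intro powr_mono2) auto
  then have "CARD('n) * \<sigma> * (1 + p) * norm v powr p \<le> CARD('n) * \<sigma> * (1 + p) * B powr p"
    using sigma_pos p_pos by (intro mult_left_mono) auto
  moreover have "(CARD('n) + \<kappa>) * local_mass t x \<le> (CARD('n) + \<kappa>) * (\<phi> 0 * M * measure lebesgue K)"
    using local_mass_bound[of t x] t kappa_pos by (intro mult_left_mono) auto
  ultimately have "- coeff_bound \<le> c"
    using c unfolding coeff_bound_def by linarith
  then show ?thesis using pde by (rule that)
qed

lemma weighted_f_attains_positive_max:
  assumes g: "continuous_on UNIV (\<lambda>(s, w). g s w)"
    and "t \<in> {0..T}" "(x, v, \<theta>) \<in> Omega" "0 < g t v * f t x v \<theta>"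
  obtains t1 x1 v1 \<theta>1 where "t1 \<in> {0..T}" "(x1, v1, \<theta>1) \<in> K" "0 < g t1 v1 * f t1 x1 v1 \<theta>1"
    "\<And>s y w \<eta>. s \<in> {0..T} \<Longrightarrow> (y, w, \<eta>) \<in> Omega \<Longrightarrow> g s w * f s y w \<eta> \<le> g t1 v1 * f t1 x1 v1 \<theta>1"
proof -
  define H where "H = (\<lambda>(s, y, w, \<eta>). g s w * f s y w \<eta>)"
  obtain q1 where q1: "q1 \<in> {0..T} \<times> K" "0 < H q1"
    and max: "\<And>q. q \<in> {0..T} \<times> Omega \<Longrightarrow> H q \<le> H q1"
  proof (rule compact_support_attains_positive_max)
    show "compact ({0..T} \<times> K)" using compact_K by (simp add: compact_Times)
    show "{0..T} \<times> K \<subseteq> {0..T} \<times> Omega" using K_subset_Omega by auto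
    have "continuous_on ({0..T} \<times> K) ((\<lambda>(s, w). g s w) \<circ> (\<lambda>q. (fst q, fst (snd (snd q)))))"
      by (intro continuous_on_compose continuous_intros continuous_on_subset[OF g]) auto
    then have "continuous_on ({0..T} \<times> K) (\<lambda>q. g (fst q) (fst (snd (snd q))))"
      by (simp add: o_def)
    moreover have "continuous_on ({0..T} \<times> K) (\<lambda>(s, y, w, \<eta>). f s y w \<eta>)"
      by (rule continuous_on_subset[OF f_continuous]) (use K_subset_Omega in auto)
    ultimately show "continuous_on ({0..T} \<times> K) H"
      unfolding H_def split_def by (intro continuous_intros) (simp_all add: split_def)
    show "H q = 0" if "q \<in> {0..T} \<times> Omega" "q \<notin> {0..T} \<times> K" for q
    proof -
      obtain s y w \<eta> where "q = (s, y, w, \<eta>)" by (cases q)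
      then have "s \<in> {0..T}" "(y, w, \<eta>) \<in> Omega" "(y, w, \<eta>) \<notin> K" using that by auto
      with f_vanishes_off_K show ?thesis by (simp add: H_def \<open>q = (s, y, w, \<eta>)\<close>)
    qed
    show "(t, x, v, \<theta>) \<in> {0..T} \<times> Omega" "0 < H (t, x, v, \<theta>)"
      using assms(2-4) by (simp_all add: H_def)
  qed (rule that)
  obtain t1 x1 v1 \<theta>1 where "q1 = (t1, x1, v1, \<theta>1)" by (cases q1)
  with q1 max show ?thesis
    by (intro that[of t1 x1 v1 \<theta>1]) (auto simp: H_def)
qed

lemma no_negative_minimum:
  assumes t: "0 < t" "t \<le> T" and z: "(x, v, \<theta>) \<in> Omega" and neg: "f t x v \<theta> < 0"
    and min: "\<And>s y w \<eta>. s \<in> {0..T} \<Longrightarrow> (y, w, \<eta>) \<in> Omega \<Longrightarrow>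
      exp (- rate * t) * f t x v \<theta> \<le> exp (- rate * s) * f s y w \<eta>"
  shows False
proof -
  have zK: "(x, v, \<theta>) \<in> K" using f_vanishes_off_K[of t x v \<theta>] t z neg by force
  have spatial_min: "f t x v \<theta> \<le> f t y w \<eta>" if "(y, w, \<eta>) \<in> Omega" for y w \<eta>
    using min[OF _ that, of t] t by simp
  have "f_x i t x v \<theta> = 0" for i
    using spatial_min z by (intro f_x_eq_0_at_extremum[OF t(1) z] disjI2 allI) (simp add: mem_Omega_iff)
  moreover have "f_v i t x v \<theta> = 0" for i
    using spatial_min z by (intro f_v_eq_0_at_min[OF t(1) z] allI) (simp add: mem_Omega_iff)
  moreover have "f_\<theta> t x v \<theta> = 0"
    using spatial_min by (intro f_\<theta>_eq_0_at_extremum[OF t(1) z] disjI2 allI impI) (simp add: mem_Omega_iff)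
  moreover obtain c where c: "- coeff_bound \<le> c"
    and "f_t t x v \<theta> + (\<Sum>i\<in>UNIV. v $ i * f_x i t x v \<theta>)
      + (\<Sum>i\<in>UNIV. f_v i t x v \<theta> * (alignF \<phi> f t x v + relaxR \<sigma> p v \<theta>) $ i)
      + f_\<theta> t x v \<theta> * alignTheta \<kappa> \<phi> f t x \<theta> + c * f t x v \<theta> = 0"
    by (rule kinetic_equation_in_K[OF t zK])
  ultimately have "f_t t x v \<theta> = - c * f t x v \<theta>" by simp
  moreover have "f_t t x v \<theta> \<le> rate * f t x v \<theta>"
    using t by (intro exp_damped_deriv_le_at_left_min[OF has_f_t[OF t(1) z] t(1)] min z) auto
  ultimately have "(- c) * f t x v \<theta> \<le> rate * f t x v \<theta>" by simp
  then have "rate \<le> - c" by (subst (asm) mult_le_cancel_right) (use neg in auto)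
  then show False using c coeff_bound_lt_rate by simp
qed

lemma f_nonneg:
  assumes "t \<in> {0..T}" "(x, v, \<theta>) \<in> Omega"
  shows "0 \<le> f t x v \<theta>"
proof (rule ccontr)
  assume "\<not> 0 \<le> f t x v \<theta>"
  then have pos: "0 < - exp (- rate * t) * f t x v \<theta>" by (simp add: mult_pos_neg)
  obtain t1 x1 v1 \<theta>1 where t1: "t1 \<in> {0..T}" and z1: "(x1, v1, \<theta>1) \<in> K"
    and neg: "0 < - exp (- rate * t1) * f t1 x1 v1 \<theta>1"
    and max: "\<And>s y w \<eta>. s \<in> {0..T} \<Longrightarrow> (y, w, \<eta>) \<in> Omega \<Longrightarrow>
      - exp (- rate * s) * f s y w \<eta> \<le> - exp (- rate * t1) * f t1 x1 v1 \<theta>1"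
    by (rule weighted_f_attains_positive_max[of "\<lambda>s w. - exp (- rate * s)", OF _ assms pos])
       (auto intro!: continuous_intros simp: split_def)
  have "(x1, v1, \<theta>1) \<in> Omega" using z1 K_subset_Omega by blast
  moreover have "f t1 x1 v1 \<theta>1 < 0" using neg by (simp add: mult_less_0_iff)
  moreover have "t1 \<noteq> 0"
    using calculation f_initial f0_nonneg by force
  ultimately show False
    using no_negative_minimum[of t1 x1 v1 \<theta>1] t1 max by force
qed

lemma linear_alignF_lower_bound:
  assumes t: "t \<in> {0..T}" and a: "0 < a" and L: "\<l> v < 0"
    and tail: "\<And>y w \<eta>. (y, w, \<eta>) \<in> Omega \<Longrightarrow> \<l> w < \<l> v \<Longrightarrow> f t y w \<eta> * (\<l> w)\<^sup>2 \<le> a * (\<l> v)\<^sup>2"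
  shows "\<phi> 0 * a * \<l> v / 4 * measure lebesgue K \<le> \<l> (alignF \<phi> f t x v)"
proof -
  have lower: "\<phi> 0 * a * \<l> v / 4 * indicator K z \<le> weight t x z * (\<l> (fst (snd z)) - \<l> v)"
    if "z \<in> Omega" for z
  proof (cases z)
    case (fields y w \<eta>)
    have zO: "(y, w, \<eta>) \<in> Omega" using that fields by simp
    have \<phi>: "0 \<le> \<phi> (norm (x - y))" "\<phi> (norm (x - y)) \<le> \<phi> 0"
      using phi_nonneg phi_le_phi_0 by auto
    have f: "0 \<le> f t y w \<eta>" using f_nonneg[OF t zO] .
    have "\<phi> 0 * a * \<l> v / 4 \<le> \<phi> (norm (x - y)) * f t y w \<eta> * (\<l> w - \<l> v)"
    proof (cases "\<l> w < \<l> v")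
      case True
      have "\<phi> 0 * (a * \<l> v / 4) \<le> \<phi> (norm (x - y)) * (a * \<l> v / 4)"
        using \<phi> a L mult_nonneg_nonpos[of a "\<l> v"] by (intro mult_right_mono_neg) auto
      also have "\<dots> \<le> \<phi> (norm (x - y)) * (f t y w \<eta> * (\<l> w - \<l> v))"
        using gap_lower_bound_of_square_bound[OF f a L True tail[OF zO True]] \<phi> by (intro mult_left_mono)
      finally show ?thesis by (simp add: mult.assoc)
    next
      case False
      have "\<phi> 0 * a * \<l> v / 4 \<le> 0"
        using phi_0_nonneg a L by (simp add: mult_nonneg_nonpos divide_nonpos_pos)
      also have "0 \<le> \<phi> (norm (x - y)) * f t y w \<eta> * (\<l> w - \<l> v)"
        using \<phi> f False by simp
      finally show ?thesis .
    qed
    moreover have "(y, w, \<eta>) \<notin> K \<Longrightarrow> f t y w \<eta> = 0" using f_vanishes_off_K[OF t zO] .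
    ultimately show ?thesis using a L phi_0_nonneg
      by (cases "z \<in> K") (auto simp: fields weight_def mult_nonneg_nonpos)
  qed
  have "integral Omega (\<lambda>z. \<phi> 0 * a * \<l> v / 4 * indicator K z)
      \<le> integral Omega (\<lambda>z. weight t x z * (\<l> (fst (snd z)) - \<l> v))"
  proof (rule integral_le[OF const_indicator_integrable _ lower])
    have "continuous_on Omega (\<lambda>z. \<l> (fst (snd z)) - \<l> v)"
      by (intro continuous_intros continuous_on_compose2[OF l_continuous]) auto
    from weight_scaleR_integrable[OF _ this] t
    show "(\<lambda>z. weight t x z * (\<l> (fst (snd z)) - \<l> v)) integrable_on Omega" by simp
  qed
  then show ?thesis
    unfolding integral_const_indicator linear_alignF[OF atLeastAtMost_iff[THEN iffD1, OF t, THEN conjunct1]] .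
qed

lemma f_t_at_weighted_spatial_max:
  assumes t: "0 < t" "t \<le> T" and zK: "(x, v, \<theta>) \<in> K" and L: "\<l> v < 0"
    and spatial_max: "\<And>y w \<eta>. (y, w, \<eta>) \<in> Omega \<Longrightarrow> f t y w \<eta> * l_neg_sq w \<le> f t x v \<theta> * (\<l> v)\<^sup>2"
  obtains c where "- coeff_bound \<le> c"
    "f_t t x v \<theta> = 2 * f t x v \<theta> / \<l> v * \<l> (alignF \<phi> f t x v)
      + 2 * \<sigma> * (\<theta> - norm v powr p) * f t x v \<theta> - c * f t x v \<theta>"
proof -
  define f1 where "f1 = f t x v \<theta>"
  have z: "(x, v, \<theta>) \<in> Omega" using zK K_subset_Omega by blast
  have L2: "0 < (\<l> v)\<^sup>2" "l_neg_sq v = (\<l> v)\<^sup>2" using L by (simp_all add: l_neg_sq_def)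
  have x_max: "f t y v \<theta> \<le> f1" for y
    using spatial_max[of y v \<theta>] z L2 by (simp add: f1_def mem_Omega_iff)
  have \<theta>_max: "f t x v \<eta> \<le> f1" if "\<eta> > 0" for \<eta>
    using spatial_max[of x v \<eta>] that L2 by (simp add: f1_def mem_Omega_iff)
  have f_x_0: "f_x i t x v \<theta> = 0" for i
    using x_max by (intro f_x_eq_0_at_extremum[OF t(1) z] disjI1 allI) (simp add: f1_def)
  have f_\<theta>_0: "f_\<theta> t x v \<theta> = 0"
    using \<theta>_max by (intro f_\<theta>_eq_0_at_extremum[OF t(1) z] disjI1 allI impI) (simp add: f1_def)
  have f_v_eq: "f_v i t x v \<theta> = - 2 * f1 * \<l> (axis i 1) / \<l> v" for i
    using spatial_max z L2(2) unfolding f1_def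
    by (intro f_v_at_weighted_max[OF t(1) z L]) (simp add: mem_Omega_iff)
  define Y where "Y = alignF \<phi> f t x v + relaxR \<sigma> p v \<theta>"
  have "(\<Sum>i\<in>UNIV. f_v i t x v \<theta> * Y $ i) = (\<Sum>i\<in>UNIV. - 2 * f1 / \<l> v * (Y $ i * \<l> (axis i 1)))"
    using L by (intro sum.cong refl) (simp add: f_v_eq field_simps)
  also have "\<dots> = - 2 * f1 / \<l> v * \<l> Y"
    by (simp add: sum_distrib_left linear_cart_basis_expansion[OF linear_l, of Y])
  finally have transport: "(\<Sum>i\<in>UNIV. f_v i t x v \<theta> * Y $ i) = - 2 * f1 / \<l> v * \<l> Y" .
  obtain c where c: "- coeff_bound \<le> c"
    and pde: "f_t t x v \<theta> + (\<Sum>i\<in>UNIV. v $ i * f_x i t x v \<theta>)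
      + (\<Sum>i\<in>UNIV. f_v i t x v \<theta> * (alignF \<phi> f t x v + relaxR \<sigma> p v \<theta>) $ i)
      + f_\<theta> t x v \<theta> * alignTheta \<kappa> \<phi> f t x \<theta> + c * f t x v \<theta> = 0"
    by (rule kinetic_equation_in_K[OF t zK])
  from pde have "f_t t x v \<theta> = 2 * f1 / \<l> v * \<l> Y - c * f1"
    using transport unfolding Y_def f_x_0 f_\<theta>_0 by (simp add: f1_def)
  also have "\<l> Y = \<l> (alignF \<phi> f t x v) + \<sigma> * (\<theta> - norm v powr p) * \<l> v"
    by (simp add: Y_def relaxR_def linear_add[OF linear_l] linear_scale[OF linear_l])
  finally show ?thesis
    using that[OF c] L by (simp add: f1_def field_simps)
qed

lemma no_positive_maximum:
  assumes t: "0 < t" "t \<le> T" and z: "(x, v, \<theta>) \<in> Omega" and pos: "0 < f t x v \<theta>"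
    and L: "\<l> v < 0"
    and max: "\<And>s y w \<eta>. s \<in> {0..T} \<Longrightarrow> (y, w, \<eta>) \<in> Omega \<Longrightarrow>
      exp (- rate * s) * l_neg_sq w * f s y w \<eta> \<le> exp (- rate * t) * l_neg_sq v * f t x v \<theta>"
  shows False
proof -
  define f1 where "f1 = f t x v \<theta>"
  have zK: "(x, v, \<theta>) \<in> K" using f_vanishes_off_K[of t x v \<theta>] t z pos by force
  have f1: "0 < f1" "f1 \<le> M" using pos f_bounded[of t x v \<theta>] t zK by (auto simp: f1_def)
  have L2: "0 < (\<l> v)\<^sup>2" "l_neg_sq v = (\<l> v)\<^sup>2" using L by (simp_all add: l_neg_sq_def)
  have spatial_max: "f t y w \<eta> * l_neg_sq w \<le> f1 * (\<l> v)\<^sup>2" if "(y, w, \<eta>) \<in> Omega" for y w \<eta>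
    using max[OF _ that, of t] t L2(2) by (simp add: f1_def mult_ac)
  obtain c where c: "- coeff_bound \<le> c" and f_t_eq: "f_t t x v \<theta> = 2 * f1 / \<l> v * \<l> (alignF \<phi> f t x v)
      + 2 * \<sigma> * (\<theta> - norm v powr p) * f1 - c * f1"
    using f_t_at_weighted_spatial_max[OF t zK L] spatial_max unfolding f1_def by blast
  note f_t_eq
  also have "\<dots> \<le> (\<phi> 0 * M * measure lebesgue K / 2 + 2 * \<sigma> * B + coeff_bound) * f1"
  proof -
    have "\<phi> 0 * f1 * \<l> v / 4 * measure lebesgue K \<le> \<l> (alignF \<phi> f t x v)"
    proof (rule linear_alignF_lower_bound[OF _ f1(1) L])
      show "f t y w \<eta> * (\<l> w)\<^sup>2 \<le> f1 * (\<l> v)\<^sup>2" if "(y, w, \<eta>) \<in> Omega" "\<l> w < \<l> v" for y w \<eta>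
        using spatial_max[OF that(1)] that(2) L by (simp add: l_neg_sq_def)
    qed (use t in auto)
    then have "2 * f1 / \<l> v * \<l> (alignF \<phi> f t x v)
        \<le> 2 * f1 / \<l> v * (\<phi> 0 * f1 * \<l> v / 4 * measure lebesgue K)"
      using f1 L by (intro mult_left_mono_neg) (auto simp: divide_pos_neg less_imp_le)
    also have "\<dots> = \<phi> 0 * f1 * measure lebesgue K / 2 * f1"
      using L by (simp add: field_simps)
    also have "\<dots> \<le> \<phi> 0 * M * measure lebesgue K / 2 * f1"
      using f1 phi_0_nonneg by (intro mult_right_mono divide_right_mono mult_left_mono) auto
    finally have "2 * f1 / \<l> v * \<l> (alignF \<phi> f t x v) \<le> \<phi> 0 * M * measure lebesgue K / 2 * f1" .
    moreover have "2 * \<sigma> * (\<theta> - norm v powr p) * f1 \<le> 2 * \<sigma> * B * f1"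
    proof -
      have "\<theta> - norm v powr p \<le> B" using K_bounded[OF zK] powr_ge_zero[of "norm v" p] by linarith
      then show ?thesis using sigma_pos f1 by (intro mult_right_mono mult_left_mono) auto
    qed
    moreover have "- (c * f1) \<le> coeff_bound * f1"
      using mult_right_mono[OF c, of f1] f1 by simp
    ultimately show ?thesis unfolding distrib_right by linarith
  qed
  also have "\<dots> < rate * f1"
    using f1 by (simp add: rate_def algebra_simps)
  finally have "f_t t x v \<theta> < rate * f t x v \<theta>" by (simp add: f1_def)
  moreover have "rate * f t x v \<theta> \<le> f_t t x v \<theta>"
  proof (rule exp_damped_deriv_ge_at_left_max[OF has_f_t[OF t(1) z] t(1)])
    fix h assume "0 < h" "h < t"
    then have "exp (- rate * (t - h)) * f (t - h) x v \<theta> * (\<l> v)\<^sup>2 \<le> exp (- rate * t) * f t x v \<theta> * (\<l> v)\<^sup>2"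
      using max[OF _ z, of "t - h"] t L2(2) by (simp add: mult_ac)
    then show "exp (- rate * (t - h)) * f (t - h) x v \<theta> \<le> exp (- rate * t) * f t x v \<theta>"
      using L2(1) by simp
  qed
  ultimately show False by simp
qed

lemma f_eq_0_where_l_neg:
  assumes "t \<in> {0..T}" "(x, v, \<theta>) \<in> Omega" "\<l> v < 0"
  shows "f t x v \<theta> = 0"
proof (rule ccontr)
  assume "f t x v \<theta> \<noteq> 0"
  then have pos: "0 < exp (- rate * t) * l_neg_sq v * f t x v \<theta>"
    using f_nonneg[OF assms(1,2)] assms(3) by (simp add: l_neg_sq_def)
  obtain t1 x1 v1 \<theta>1 where t1: "t1 \<in> {0..T}" and z1: "(x1, v1, \<theta>1) \<in> K"
    and pos: "0 < exp (- rate * t1) * l_neg_sq v1 * f t1 x1 v1 \<theta>1"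
    and max: "\<And>s y w \<eta>. s \<in> {0..T} \<Longrightarrow> (y, w, \<eta>) \<in> Omega \<Longrightarrow>
      exp (- rate * s) * l_neg_sq w * f s y w \<eta> \<le> exp (- rate * t1) * l_neg_sq v1 * f t1 x1 v1 \<theta>1"
    by (rule weighted_f_attains_positive_max[of "\<lambda>s w. exp (- rate * s) * l_neg_sq w", OF _ assms(1,2) pos])
       (auto intro!: continuous_intros continuous_on_compose2[OF l_neg_sq_continuous] simp: split_def)
  have z1: "(x1, v1, \<theta>1) \<in> Omega" using z1 K_subset_Omega by blast
  have "0 \<le> l_neg_sq v1" "0 \<le> f t1 x1 v1 \<theta>1"
    using f_nonneg[OF t1 z1] by (simp_all add: l_neg_sq_def)
  then have f1: "0 < f t1 x1 v1 \<theta>1" and L: "\<l> v1 < 0"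
    using pos by (auto simp: zero_less_mult_iff l_neg_sq_def)
  have "t1 \<noteq> 0"
  proof
    assume "t1 = 0"
    then have "(x1, v1, \<theta>1) \<in> supp_Omega (\<lambda>(x, v, \<theta>). f0 x v \<theta>)"
      using f1 f_initial[OF z1] by (intro mem_supp_Omega[OF z1]) simp
    then show False using l_nonneg_on_supp_f0 L by fastforce
  qed
  then show False
    using no_positive_maximum[of t1 x1 v1 \<theta>1, OF _ _ z1 f1 L max] t1 by force
qed

end

context kinetic_setting begin

lemma horizon_exists:
  assumes "T \<ge> 0"
  obtains K M B where "kinetic_horizon \<phi> \<sigma> p \<kappa> f0 f \<l> T K M B"
proof -
  obtain K where K: "compact K" "K \<subseteq> Omega"
    "\<And>t x v \<theta>. t \<in> {0..T} \<Longrightarrow> (x, v, \<theta>) \<in> Omega \<Longrightarrow> (x, v, \<theta>) \<notin> K \<Longrightarrow> f t x v \<theta> = 0"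
    using compact_support[OF assms] by blast
  have "continuous_on ({0..T} \<times> K) (\<lambda>(t, x, v, \<theta>). f t x v \<theta>)"
    by (rule continuous_on_subset[OF f_continuous]) (use K(2) in auto)
  then have "bounded ((\<lambda>(t, x, v, \<theta>). f t x v \<theta>) ` ({0..T} \<times> K))"
    by (intro compact_imp_bounded compact_continuous_image compact_Times compact_Icc K(1))
  then obtain M where M: "\<forall>y \<in> (\<lambda>(t, x, v, \<theta>). f t x v \<theta>) ` ({0..T} \<times> K). norm y \<le> M"
    unfolding bounded_iff by blast
  obtain B where B: "\<And>z. z \<in> K \<Longrightarrow> norm z \<le> B"
    using compact_imp_bounded[OF K(1)] unfolding bounded_iff by blast
  have "kinetic_horizon \<phi> \<sigma> p \<kappa> f0 f \<l> T K (max M 0) (max B 0)"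
  proof (intro kinetic_horizon.intro kinetic_setting_axioms kinetic_horizon_axioms.intro K)
    show "\<bar>f t x v \<theta>\<bar> \<le> max M 0" if "t \<in> {0..T}" "(x, v, \<theta>) \<in> K" for t x v \<theta>
      using M[rule_format, OF imageI[of "(t, x, v, \<theta>)"]] that by simp
    show "norm v \<le> max B 0 \<and> \<theta> \<le> max B 0" if "(x, v, \<theta>) \<in> K" for x v \<theta>
    proof -
      have "norm v \<le> norm (v, \<theta>)" "norm \<theta> \<le> norm (v, \<theta>)" "norm (v, \<theta>) \<le> norm (x, v, \<theta>)"
        by (rule norm_fst_le norm_snd_le)+
      then show ?thesis using B[OF that] by auto
    qed
  qed simp_all
  then show ?thesis by (rule that)
qed

lemma supp_subset_l_nonneg:
  assumes "t \<ge> 0"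
  shows "supp_Omega (\<lambda>(x, v, \<theta>). f t x v \<theta>) \<subseteq> {z. 0 \<le> \<l> (fst (snd z))}"
proof (rule supp_Omega_subset_closed)
  show "closed {z :: (real^'n) \<times> (real^'n) \<times> real. 0 \<le> \<l> (fst (snd z))}"
    by (intro closed_Collect_le continuous_intros continuous_on_compose2[OF l_continuous]) auto
  obtain K M B where "kinetic_horizon \<phi> \<sigma> p \<kappa> f0 f \<l> t K M B"
    using horizon_exists[OF assms] .
  then interpret kinetic_horizon \<phi> \<sigma> p \<kappa> f0 f \<l> t K M B .
  show "(\<lambda>(x, v, \<theta>). f t x v \<theta>) z = 0" if "z \<in> Omega" "z \<notin> {z. 0 \<le> \<l> (fst (snd z))}" for z
    using that assms f_eq_0_where_l_neg by (cases z) auto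
qed

end

theorem mainTheorem3:
  fixes \<phi> :: "real \<Rightarrow> real" and \<sigma> p \<kappa> :: real
    and f0 :: "real^'n \<Rightarrow> real^'n \<Rightarrow> real \<Rightarrow> real"
    and f :: "real \<Rightarrow> real^'n \<Rightarrow> real^'n \<Rightarrow> real \<Rightarrow> real"
    and \<l> :: "real^'n \<Rightarrow> real"
  assumes "smooth_on_nonneg \<phi>"
    and "\<forall>r\<ge>0. \<phi> r \<ge> 0"
    and "\<forall>r s. 0 \<le> r \<and> r \<le> s \<longrightarrow> \<phi> s \<le> \<phi> r"
    and "\<sigma> > 0" and "p > 0" and "\<kappa> > 0"
    and "\<forall>z\<in>Omega. f0 (fst z) (fst (snd z)) (snd (snd z)) \<ge> 0"
    and "compact (supp_Omega (\<lambda>(x, v, \<theta>). f0 x v \<theta>))"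
    and "kinetic_solution \<phi> \<sigma> p \<kappa> f0 f"
    and "linear \<l>"
    and "\<forall>(x0, v0, \<theta>0) \<in> supp_Omega (\<lambda>(x, v, \<theta>). f0 x v \<theta>). \<l> v0 \<ge> 0"
  shows "\<forall>t>0. \<forall>(x, v, \<theta>) \<in> supp_Omega (\<lambda>(x, v, \<theta>). f t x v \<theta>). \<l> v \<ge> 0"
proof -
  interpret kinetic_setting \<phi> \<sigma> p \<kappa> f0 f \<l>
  proof (rule kinetic_setting.intro)
    show "0 \<le> \<l> v" if "(x, v, \<theta>) \<in> supp_Omega (\<lambda>(x, v, \<theta>). f0 x v \<theta>)" for x v \<theta>
      using assms(11) that by fastforce
  qed (use assms in auto)
  show ?thesis
  proof (intro allI impI ballI)
    fix t :: real and z assume "t > 0" "z \<in> supp_Omega (\<lambda>(x, v, \<theta>). f t x v \<theta>)"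
    then have "0 \<le> \<l> (fst (snd z))" using supp_subset_l_nonneg[of t] by auto
    then show "case z of (x, v, \<theta>) \<Rightarrow> 0 \<le> \<l> v" by (simp add: split_def)
  qed
qed

end
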